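(* Assume the setting and Assumption $( * )$ described in the context. Let $(y_0,w_0)\in\mathscr{D}\times\mathbb{R}^n$ and let $\{(y_\alpha,w_\alpha)\}_{\alpha\in A}$ be a family (with arbitrary index set $A$) of solutions of the integrated Maxey–Riley system with initial condition $(y_0,w_0)$, where $(y_\alpha,w_\alpha)$ has domain $[t_0,T_\alpha)$. Let $T$ be such that $[t_0,T)=\bigcup_{\alpha\in A}[t_0,T_\alpha)$ and define $(y(t),w(t))=(y_\alpha(t),w_\alpha(t))$ whenever $t\in[t_0,T_\alpha)$. Then $(y,w)$ is well defined and is a solution of the integrated Maxey–Riley system on $[t_0,T)$ with initial condition $(y_0,w_0)$.
   Context: Fix $n\ge 1$, a domain $\mathscr{D}\subseteq\mathbb{R}^n$, an initial time $t_0\ge 0$, a velocity field $u:\mathscr{D}\times[0,\infty)\to\mathbb{R}^n$, real constants $R,\mu,\kappa,\gamma>0$ and a constant vector $g\in\mathbb{R}^n$. Write $\frac{D}{Dt}=\partial_t+(u\cdot\nabla)$ and define $A_u,B_u:\mathscr{D}\times[t_0,\infty)\to\mathbb{R}^n$, $M_u:\mathscr{D}\times[t_0,\infty)\to\mathbb{R}^{n\times n}$ by $A_u=u+\frac{\gamma}{6}\mu^{-1}\Delta u$, $M_u=\nabla u+\frac{\gamma}{6}\mu^{-1}\nabla\Delta u$, $B_u=\left(\frac{3R}{2}-1\right)\left(\frac{Du}{Dt}-g\right)+\left(\frac{R}{20}-\frac16\right)\gamma\mu^{-1}\frac{D}{Dt}\Delta u-\frac{\gamma}{6}\mu^{-1}\left(\nabla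 u+\frac{\gamma}{6}\mu^{-1}\nabla\Delta u\right)\Delta u$. The integrated Maxey–Riley system is $y(t)=y_0+\int_{t_0}^t\big(w(s)+A_u(y(s),s)\big)\,ds$, $w(t)=w_0+\int_{t_0}^t\Big(-\mu w(s)-M_u(y(s),s)w(s)-\kappa\mu^{1/2}\frac{w(s)}{\sqrt{t-s}}+B_u(y(s),s)\Big)\,ds$. For $T\in(t_0,\infty]$, a solution with domain $[t_0,T)$ and initial condition $(y_0,w_0)$ is a pair of continuous maps $y:[t_0,T)\to\mathscr{D}$, $w:[t_0,T)\to\mathbb{R}^n$ satisfying both equations for every $t\in[t_0,T)$. Assumption $( * )$: $u$ is smooth enough that the first-order partial derivatives in time and space of $A_u$ and $B_u$ exist, are continuous, and are uniformly bounded in time and space, i.e. there is $L_b$ with $\|\partial_tA_u\|_\infty,\|\nabla A_u\|_\infty,\|\partial_tB_u\|_\infty,\|\nabla B_u\|_\infty<L_b$. *)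

theory Defs
  imports "HOL-Analysis.Analysis"
begin


text \<open>Partial derivative of a space-time field f :: R^n x [0,oo) -> R^n.
  Direction None = time (one-sided at t = 0, the field lives on [0,oo)),
  direction Some i = i-th spatial coordinate direction.\<close>
definition pd :: "'n option \<Rightarrow> (real^'n::finite \<Rightarrow> real \<Rightarrow> real^'n) \<Rightarrow> (real^'n::finite \<Rightarrow> real \<Rightarrow> real^'n)" where
  "pd d f x t = (case d of
      None \<Rightarrow> vector_derivative (\<lambda>s. f x s) (at t within {0..})
    | Some i \<Rightarrow> vector_derivative (\<lambda>h. f (x + h *\<^sub>R axis i 1) t) (at 0))"

definition has_pd :: "'n option \<Rightarrow> (real^'n::finite \<Rightarrow> real \<Rightarrow> real^'n) \<Rightarrow> real^'n \<Rightarrow> real \<Rightarrow> bool" where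
  "has_pd d f x t = (case d of
      None \<Rightarrow> (\<lambda>s. f x s) differentiable (at t within {0..})
    | Some i \<Rightarrow> (\<lambda>h. f (x + h *\<^sub>R axis i 1) t) differentiable (at 0))"

fun ipd :: "'n option list \<Rightarrow> (real^'n::finite \<Rightarrow> real \<Rightarrow> real^'n) \<Rightarrow> (real^'n::finite \<Rightarrow> real \<Rightarrow> real^'n)" where
  "ipd [] f = f"
| "ipd (d # ds) f = pd d (ipd ds f)"

definition Ck_on :: "nat \<Rightarrow> ((real^'n) \<times> real) set \<Rightarrow> (real^'n::finite \<Rightarrow> real \<Rightarrow> real^'n) \<Rightarrow> bool" where
  "Ck_on k S f = (\<forall>ds. length ds \<le> k \<longrightarrow>
      continuous_on S (\<lambda>(x,t). ipd ds f x t) \<and>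
      (length ds < k \<longrightarrow> (\<forall>d. \<forall>(x,t)\<in>S. has_pd d (ipd ds f) x t)))"

definition jac :: "(real^'n::finite \<Rightarrow> real \<Rightarrow> real^'n) \<Rightarrow> real^'n \<Rightarrow> real \<Rightarrow> real^'n \<Rightarrow> real^'n" where
  "jac f x t v = (\<Sum>k\<in>UNIV. (v $ k) *\<^sub>R pd (Some k) f x t)"

definition lap :: "(real^'n::finite \<Rightarrow> real \<Rightarrow> real^'n) \<Rightarrow> (real^'n::finite \<Rightarrow> real \<Rightarrow> real^'n)" where
  "lap f x t = (\<Sum>i\<in>UNIV. pd (Some i) (pd (Some i) f) x t)"

definition matd :: "(real^'n::finite \<Rightarrow> real \<Rightarrow> real^'n) \<Rightarrow> (real^'n::finite \<Rightarrow> real \<Rightarrow> real^'n) \<Rightarrow> (real^'n::finite \<Rightarrow> real \<Rightarrow> real^'n)" where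
  "matd u f x t = pd None f x t + jac f x t (u x t)"

definition A_u :: "(real^'n::finite \<Rightarrow> real \<Rightarrow> real^'n) \<Rightarrow> real \<Rightarrow> real \<Rightarrow> (real^'n::finite \<Rightarrow> real \<Rightarrow> real^'n)" where
  "A_u u \<mu> \<gamma> x t = u x t + (\<gamma> / 6 / \<mu>) *\<^sub>R lap u x t"

definition M_u :: "(real^'n::finite \<Rightarrow> real \<Rightarrow> real^'n) \<Rightarrow> real \<Rightarrow> real \<Rightarrow> real^'n \<Rightarrow> real \<Rightarrow> real^'n \<Rightarrow> real^'n" where
  "M_u u \<mu> \<gamma> x t v = jac u x t v + (\<gamma> / 6 / \<mu>) *\<^sub>R jac (lap u) x t v"

definition B_u :: "(real^'n::finite \<Rightarrow> real \<Rightarrow> real^'n) \<Rightarrow> real \<Rightarrow> real \<Rightarrow> real \<Rightarrow> real^'n \<Rightarrow> (real^'n::finite \<Rightarrow> real \<Rightarrow> real^'n)" where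
  "B_u u R \<mu> \<gamma> g x t =
     (3 * R / 2 - 1) *\<^sub>R (matd u u x t - g)
   + ((R / 20 - 1 / 6) * \<gamma> / \<mu>) *\<^sub>R matd u (lap u) x t
   - (\<gamma> / 6 / \<mu>) *\<^sub>R M_u u \<mu> \<gamma> x t (lap u x t)"

definition MR_solution ::
  "(real^'n::finite \<Rightarrow> real \<Rightarrow> real^'n) \<Rightarrow> real \<Rightarrow> real \<Rightarrow> real \<Rightarrow> real \<Rightarrow> real^'n \<Rightarrow> (real^'n) set \<Rightarrow> real \<Rightarrow> ereal
    \<Rightarrow> real^'n \<Rightarrow> real^'n \<Rightarrow> (real \<Rightarrow> real^'n) \<Rightarrow> (real \<Rightarrow> real^'n) \<Rightarrow> bool" where
  "MR_solution u R \<mu> \<kappa> \<gamma> g D t0 T y0 w0 y w \<longleftrightarrow>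
     ereal t0 < T \<and>
     continuous_on {t. t0 \<le> t \<and> ereal t < T} y \<and>
     continuous_on {t. t0 \<le> t \<and> ereal t < T} w \<and>
     (\<forall>t. t0 \<le> t \<and> ereal t < T \<longrightarrow>
        y t \<in> D \<and>
        ((\<lambda>s. w s + A_u u \<mu> \<gamma> (y s) s) has_integral (y t - y0)) {t0..t} \<and>
        ((\<lambda>s. - \<mu> *\<^sub>R w s - M_u u \<mu> \<gamma> (y s) s (w s)
               - (\<kappa> * sqrt \<mu> / sqrt (t - s)) *\<^sub>R w s + B_u u R \<mu> \<gamma> g (y s) s)
           has_integral (w t - w0)) {t0..t})"

end

theory Submission
  imports Defs
begin

text \<open>
  Two solutions with the same initial data coincide on their common interval of existence, so the
  family glues to a well-defined pair (y, w). It is a solution because every defining condition at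
  time t only involves [t0, t], which lies in the domain of a single member, and continuity is local.

  Uniqueness: near each point of D the coefficients are Lipschitz in space; A_u and B_u because
  the hypothesis star bounds their derivatives, M_u because it is linear in w with columns made of
  derivatives of u of order at most 3, whose derivatives are continuous (u is C^4) and so bounded on
  a compact box. Bounded partial derivatives give a Lipschitz bound by changing one coordinate at a
  time. If two solutions agree on [t0, ts], their largest gap m on [ts, ts + h] satisfies
  m \<le> K sqrt h m, because the Basset kernel 1 / sqrt (t - s) integrates to 2 sqrt (t - ts).
  So m = 0 for small h, and real induction over [t0, \<tau>] gives agreement everywhere.
\<close>

lemma bounded_vector_derivative_imp_lipschitz:
  fixes f :: "real \<Rightarrow> 'b::real_normed_vector"
  assumes "convex X"
    and "\<And>x. x \<in> X \<Longrightarrow> (f has_vector_derivative f' x) (at x within X)"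
    and "\<And>x. x \<in> X \<Longrightarrow> norm (f' x) \<le> M" and "0 \<le> M"
  shows "M-lipschitz_on X f"
  by (rule bounded_derivative_imp_lipschitz[where f'="\<lambda>x h. h *\<^sub>R f' x"])
     (use assms in \<open>auto simp: has_vector_derivative_def onorm_scaleR_left onorm_id\<close>)

lemma has_vector_derivative_at_shift:
  assumes "((\<lambda>s. f (x + s)) has_vector_derivative f') (at 0)"
  shows "(f has_vector_derivative f') (at x)"
proof -
  have "((\<lambda>s. s - x) has_vector_derivative 1) (at x)"
    by (auto intro!: derivative_eq_intros)
  moreover have "((\<lambda>s. f (x + s)) has_vector_derivative f') (at ((\<lambda>s. s - x) x))"
    using assms by simp
  ultimately have "((\<lambda>s. f (x + (s - x))) has_vector_derivative f') (at x)"
    using vector_diff_chain_at by (fastforce simp: o_def)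
  then show ?thesis by simp
qed

lemma dist_axis_increment_le:
  fixes f :: "real^'n \<Rightarrow> 'b::real_normed_vector"
  assumes segment: "\<And>h. h \<in> closed_segment 0 d \<Longrightarrow> z + h *\<^sub>R axis k 1 \<in> S"
    and deriv: "\<And>z. z \<in> S \<Longrightarrow> ((\<lambda>h. f (z + h *\<^sub>R axis k 1)) has_vector_derivative f' z) (at 0)"
    and bound: "\<And>z. z \<in> S \<Longrightarrow> norm (f' z) \<le> M" and "0 \<le> M"
  shows "dist (f (z + d *\<^sub>R axis k 1)) (f z) \<le> M * \<bar>d\<bar>"
proof -
  define \<phi> where "\<phi> h = f (z + h *\<^sub>R axis k 1)" for h
  have "M-lipschitz_on (closed_segment 0 d) \<phi>"
  proof (rule bounded_vector_derivative_imp_lipschitz[OF convex_closed_segment _ _ \<open>0 \<le> M\<close>])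
    fix h assume h: "h \<in> closed_segment 0 d"
    have "((\<lambda>s. \<phi> (h + s)) has_vector_derivative f' (z + h *\<^sub>R axis k 1)) (at 0)"
      using deriv[OF segment[OF h]] by (simp add: \<phi>_def algebra_simps scaleR_add_left)
    then show "(\<phi> has_vector_derivative f' (z + h *\<^sub>R axis k 1)) (at h within closed_segment 0 d)"
      by (rule has_vector_derivative_at_within[OF has_vector_derivative_at_shift])
    show "norm (f' (z + h *\<^sub>R axis k 1)) \<le> M"
      using bound[OF segment[OF h]] .
  qed
  then have "dist (\<phi> d) (\<phi> 0) \<le> M * dist d 0"
    by (rule lipschitz_onD) auto
  then show ?thesis by (simp add: \<phi>_def dist_real_def)
qed

lemma bounded_partial_derivatives_imp_lipschitz_on_cbox:
  fixes f :: "real^'n \<Rightarrow> 'b::real_normed_vector"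
  assumes deriv: "\<And>z j. z \<in> cbox a b \<Longrightarrow> ((\<lambda>h. f (z + h *\<^sub>R axis j 1)) has_vector_derivative f' j z) (at 0)"
    and bound: "\<And>z j. z \<in> cbox a b \<Longrightarrow> norm (f' j z) \<le> M" and "0 \<le> M"
  shows "(real CARD('n) * M)-lipschitz_on (cbox a b) f"
proof (rule lipschitz_onI)
  fix x x' assume x: "x \<in> cbox a b" and x': "x' \<in> cbox a b"
  \<comment> \<open>Walk from x' to x one coordinate at a time; every intermediate point stays in the box.\<close>
  define z where "z S = (\<chi> i. if i \<in> S then x$i else x'$i)" for S
  have step: "dist (f (z (insert k S))) (f (z S)) \<le> M * \<bar>x$k - x'$k\<bar>" if "k \<notin> S" for S k
  proof -
    have "z S + h *\<^sub>R axis k 1 \<in> cbox a b" if "h \<in> closed_segment 0 (x$k - x'$k)" for h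
    proof -
      have "a$k \<le> x$k" "x$k \<le> b$k" "a$k \<le> x'$k" "x'$k \<le> b$k"
        using x x' by (auto simp: mem_box_cart)
      then have "a$k \<le> x'$k + h \<and> x'$k + h \<le> b$k"
        using that by (auto simp: closed_segment_eq_real_ivl split: if_splits)
      then show ?thesis
        using x x' \<open>k \<notin> S\<close> by (auto simp: mem_box_cart z_def axis_def)
    qed
    from dist_axis_increment_le[OF this deriv bound \<open>0 \<le> M\<close>]
    have "dist (f (z S + (x$k - x'$k) *\<^sub>R axis k 1)) (f (z S)) \<le> M * \<bar>x$k - x'$k\<bar>"
      by blast
    moreover have "z (insert k S) = z S + (x$k - x'$k) *\<^sub>R axis k 1"
      using that by (auto simp: z_def vec_eq_iff axis_def)
    ultimately show ?thesis by simp
  qed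
  have "dist (f (z S)) (f x') \<le> M * (\<Sum>i\<in>S. \<bar>x$i - x'$i\<bar>)" for S
  proof (induction S rule: finite_induct[OF finite])
    case 1
    have "z {} = x'" by (simp add: z_def vec_eq_iff)
    then show ?case by simp
  next
    case (2 k S)
    then show ?case
      using step[of k S] dist_triangle[of "f (z (insert k S))" "f x'" "f (z S)"]
      by (simp add: distrib_left)
  qed
  from this[of UNIV] have "dist (f x) (f x') \<le> M * (\<Sum>i\<in>UNIV. \<bar>x$i - x'$i\<bar>)"
    by (simp add: z_def)
  also have "\<dots> \<le> M * (\<Sum>i\<in>(UNIV::'n set). dist x x')"
    using component_le_norm_cart[of "x - x'"] \<open>0 \<le> M\<close>
    by (intro mult_left_mono sum_mono) (auto simp: dist_norm)
  finally show "dist (f x) (f x') \<le> real CARD('n) * M * dist x x'"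
    by (simp add: mult_ac)
qed (use \<open>0 \<le> M\<close> in simp)

lemma norm_sum_component_scaleR_le:
  fixes v :: "real^'n" and F :: "'n \<Rightarrow> 'b::real_normed_vector"
  assumes "\<And>k. norm (F k) \<le> C" "0 \<le> C"
  shows "norm (\<Sum>k\<in>UNIV. v$k *\<^sub>R F k) \<le> real CARD('n) * C * norm v"
proof -
  have "norm (\<Sum>k\<in>UNIV. v$k *\<^sub>R F k) \<le> (\<Sum>k\<in>UNIV. norm (v$k *\<^sub>R F k))"
    by (rule norm_sum)
  also have "\<dots> \<le> (\<Sum>k\<in>(UNIV::'n set). C * norm v)"
    using assms component_le_norm_cart[of v]
    by (intro sum_mono) (simp add: mult_mono' mult.commute)
  finally show ?thesis by simp
qed

lemma lipschitz_on_sum: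
  fixes f :: "'i \<Rightarrow> 'a::metric_space \<Rightarrow> 'b::real_normed_vector"
  assumes "finite I" "\<And>i. i \<in> I \<Longrightarrow> (L i)-lipschitz_on U (f i)"
  shows "(\<Sum>i\<in>I. L i)-lipschitz_on U (\<lambda>x. \<Sum>i\<in>I. f i x)"
  using assms
proof (induction I rule: finite_induct)
  case empty
  show ?case using lipschitz_on_constant by simp
next
  case (insert i I)
  then show ?case by (simp add: lipschitz_on_add)
qed

lemma lipschitz_on_sum_scaleR_components:
  fixes c :: "'n::finite \<Rightarrow> 'a::metric_space \<Rightarrow> 'b::real_normed_vector"
  assumes bound: "\<And>k x. x \<in> K \<Longrightarrow> norm (c k x) \<le> C" and lip: "\<And>k. L-lipschitz_on K (c k)"
    and "0 \<le> C"
  shows "x \<in> K \<Longrightarrow> (real CARD('n) * C)-lipschitz_on UNIV (\<lambda>v::real^'n. \<Sum>k\<in>UNIV. v$k *\<^sub>R c k x)"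
    and "(real CARD('n) * L * norm v)-lipschitz_on K (\<lambda>x. \<Sum>k\<in>UNIV. v$k *\<^sub>R c k x)"
proof -
  assume "x \<in> K"
  show "(real CARD('n) * C)-lipschitz_on UNIV (\<lambda>v::real^'n. \<Sum>k\<in>UNIV. v$k *\<^sub>R c k x)"
  proof (rule lipschitz_onI)
    fix v v' :: "real^'n"
    have "dist (\<Sum>k\<in>UNIV. v$k *\<^sub>R c k x) (\<Sum>k\<in>UNIV. v'$k *\<^sub>R c k x)
        = norm (\<Sum>k\<in>UNIV. (v - v')$k *\<^sub>R c k x)"
      by (simp add: dist_norm scaleR_diff_left sum_subtractf)
    also have "\<dots> \<le> real CARD('n) * C * dist v v'"
      using norm_sum_component_scaleR_le[where F="\<lambda>k. c k x" and v="v - v'", OF bound \<open>0 \<le> C\<close>]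
        \<open>x \<in> K\<close> by (simp add: dist_norm)
    finally show "dist (\<Sum>k\<in>UNIV. v$k *\<^sub>R c k x) (\<Sum>k\<in>UNIV. v'$k *\<^sub>R c k x) \<le> real CARD('n) * C * dist v v'" .
  qed (use \<open>0 \<le> C\<close> in simp)
next
  have "0 \<le> L"
    using lipschitz_on_nonneg[OF lip] .
  have "(\<Sum>k\<in>UNIV. \<bar>v$k\<bar> * L)-lipschitz_on K (\<lambda>x. \<Sum>k\<in>UNIV. v$k *\<^sub>R c k x)"
    by (intro lipschitz_on_sum lipschitz_on_cmult lip) simp
  moreover have "(\<Sum>k\<in>UNIV. \<bar>v$k\<bar> * L) \<le> (\<Sum>k\<in>(UNIV::'n set). norm v * L)"
    using component_le_norm_cart[of v] \<open>0 \<le> L\<close> by (intro sum_mono mult_right_mono) auto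
  ultimately show "(real CARD('n) * L * norm v)-lipschitz_on K (\<lambda>x. \<Sum>k\<in>UNIV. v$k *\<^sub>R c k x)"
    by (auto simp: mult_ac intro: lipschitz_on_le)
qed

lemma has_pd_Some_imp_has_vector_derivative:
  "has_pd (Some j) f x t \<Longrightarrow>
     ((\<lambda>h. f (x + h *\<^sub>R axis j 1) t) has_vector_derivative pd (Some j) f x t) (at 0)"
  by (simp add: has_pd_def pd_def vector_derivative_works)

lemma Ck_on_has_pd:
  assumes "Ck_on k X u" "length ds < k" "(x, t) \<in> X"
  shows "has_pd d (ipd ds u) x t"
proof -
  have "\<forall>(x, t)\<in>X. has_pd d (ipd ds u) x t"
    using assms(1,2) unfolding Ck_on_def by auto
  then show ?thesis using assms(3) by auto
qed

lemma Ck_on_ipd_bounded: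
  fixes u :: "real^'n \<Rightarrow> real \<Rightarrow> real^'n"
  assumes "Ck_on k X u" "compact K" "K \<subseteq> X"
  obtains B where "0 \<le> B" "\<And>ds x t. length ds \<le> k \<Longrightarrow> (x, t) \<in> K \<Longrightarrow> norm (ipd ds u x t) \<le> B"
proof -
  have "finite {ds::'n option list. length ds \<le> k}"
    using finite_lists_length_le[of "UNIV :: 'n option set" k] by simp
  moreover have "continuous_on K (\<lambda>(x, t). ipd ds u x t)" if "length ds \<le> k" for ds
    using assms(1,3) that by (auto simp: Ck_on_def intro: continuous_on_subset)
  ultimately have "compact (\<Union>ds\<in>{ds. length ds \<le> k}. (\<lambda>(x, t). ipd ds u x t) ` K)"
    using assms(2) by (intro compact_UN compact_continuous_image) auto
  then obtain B where "\<forall>z\<in>(\<Union>ds\<in>{ds. length ds \<le> k}. (\<lambda>(x, t). ipd ds u x t) ` K). norm z \<le> B"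
    using compact_imp_bounded bounded_iff by metis
  then show ?thesis
    by (intro that[of "max 0 B"]) fastforce+
qed

lemma Ck_on_ipd_lipschitz:
  fixes u :: "real^'n \<Rightarrow> real \<Rightarrow> real^'n"
  assumes u: "Ck_on k (D \<times> {0..}) u" and "cbox a b \<subseteq> D" "compact S" "S \<subseteq> {0..}"
  obtains L where "\<And>ds t. length ds < k \<Longrightarrow> t \<in> S \<Longrightarrow> L-lipschitz_on (cbox a b) (\<lambda>x. ipd ds u x t)"
proof -
  have K: "cbox a b \<times> S \<subseteq> D \<times> {0..}"
    using assms by auto
  obtain B where "0 \<le> B" and B: "\<And>ds x t. length ds \<le> k \<Longrightarrow> (x, t) \<in> cbox a b \<times> S \<Longrightarrow> norm (ipd ds u x t) \<le> B"
    using Ck_on_ipd_bounded[OF u compact_Times[OF compact_cbox \<open>compact S\<close>] K] by blast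
  have "(real CARD('n) * B)-lipschitz_on (cbox a b) (\<lambda>x. ipd ds u x t)"
    if "length ds < k" "t \<in> S" for ds t
  proof (rule bounded_partial_derivatives_imp_lipschitz_on_cbox[where f'="\<lambda>j z. ipd (Some j # ds) u z t"])
    fix z j assume z: "z \<in> cbox a b"
    have "has_pd (Some j) (ipd ds u) z t"
      using Ck_on_has_pd[OF u] that z K by blast
    then show "((\<lambda>h. ipd ds u (z + h *\<^sub>R axis j 1) t) has_vector_derivative ipd (Some j # ds) u z t) (at 0)"
      by (simp add: has_pd_Some_imp_has_vector_derivative)
    show "norm (ipd (Some j # ds) u z t) \<le> B"
      using B[of "Some j # ds" z t] that z by simp
  qed fact
  then show ?thesis using that by blast
qed

lemma pd_lap:
  assumes "\<And>i. has_pd (Some k) (ipd [Some i, Some i] u) x t"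
  shows "pd (Some k) (lap u) x t = (\<Sum>i\<in>UNIV. ipd [Some k, Some i, Some i] u x t)"
proof -
  have "((\<lambda>h. lap u (x + h *\<^sub>R axis k 1) t) has_vector_derivative
      (\<Sum>i\<in>UNIV. ipd [Some k, Some i, Some i] u x t)) (at 0)"
    unfolding lap_def
    by (rule has_vector_derivative_sum)
       (use has_pd_Some_imp_has_vector_derivative[OF assms] in simp)
  then show ?thesis
    by (simp add: pd_def vector_derivative_at)
qed

definition M_u_col :: "(real^'n::finite \<Rightarrow> real \<Rightarrow> real^'n) \<Rightarrow> real \<Rightarrow> real \<Rightarrow> 'n \<Rightarrow> real^'n \<Rightarrow> real \<Rightarrow> real^'n" where
  "M_u_col u \<mu> \<gamma> k x t = pd (Some k) u x t + (\<gamma> / 6 / \<mu>) *\<^sub>R pd (Some k) (lap u) x t"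

lemma M_u_eq_sum_M_u_col: "M_u u \<mu> \<gamma> x t v = (\<Sum>k\<in>UNIV. v$k *\<^sub>R M_u_col u \<mu> \<gamma> k x t)"
  by (simp add: M_u_def M_u_col_def jac_def scaleR_add_right sum.distrib scaleR_sum_right mult_ac)

lemma M_u_col_bounded_lipschitz:
  fixes u :: "real^'n \<Rightarrow> real \<Rightarrow> real^'n"
  assumes u: "Ck_on 4 (D \<times> {0..}) u" and "cbox a b \<subseteq> D" "compact S" "S \<subseteq> {0..}"
  obtains C L where "0 \<le> C" "\<And>k x t. x \<in> cbox a b \<Longrightarrow> t \<in> S \<Longrightarrow> norm (M_u_col u \<mu> \<gamma> k x t) \<le> C"
    "\<And>k t. t \<in> S \<Longrightarrow> L-lipschitz_on (cbox a b) (\<lambda>x. M_u_col u \<mu> \<gamma> k x t)"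
proof -
  define c where "c = \<gamma> / 6 / \<mu>"
  have K: "cbox a b \<times> S \<subseteq> D \<times> {0..}"
    using assms by auto
  obtain B where "0 \<le> B" and B: "\<And>ds x t. length ds \<le> 4 \<Longrightarrow> (x, t) \<in> cbox a b \<times> S \<Longrightarrow> norm (ipd ds u x t) \<le> B"
    using Ck_on_ipd_bounded[OF u compact_Times[OF compact_cbox \<open>compact S\<close>] K] by blast
  obtain L where L: "\<And>ds t. length ds < 4 \<Longrightarrow> t \<in> S \<Longrightarrow> L-lipschitz_on (cbox a b) (\<lambda>x. ipd ds u x t)"
    using Ck_on_ipd_lipschitz[OF u assms(2-4)] by blast
  have col_ipd: "M_u_col u \<mu> \<gamma> k x t = ipd [Some k] u x t + c *\<^sub>R (\<Sum>i\<in>UNIV. ipd [Some k, Some i, Some i] u x t)"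
    if "x \<in> cbox a b" "t \<in> S" for k x t
  proof -
    have "has_pd (Some k) (ipd [Some i, Some i] u) x t" for i
      using Ck_on_has_pd[OF u, of "[Some i, Some i]"] K that by auto
    then show ?thesis by (simp add: M_u_col_def c_def pd_lap)
  qed
  show thesis
  proof (rule that[of "B + \<bar>c\<bar> * (real CARD('n) * B)" "L + \<bar>c\<bar> * (\<Sum>i\<in>(UNIV::'n set). L)"])
    show "0 \<le> B + \<bar>c\<bar> * (real CARD('n) * B)"
      using \<open>0 \<le> B\<close> by (intro add_nonneg_nonneg mult_nonneg_nonneg) auto
  next
    fix k x t assume "x \<in> cbox a b" "t \<in> S"
    then have "norm (ipd [Some k] u x t) \<le> B" "norm (ipd [Some k, Some i, Some i] u x t) \<le> B" for i
      using B[of "[Some k]"] B[of "[Some k, Some i, Some i]"] by auto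
    moreover have "norm (\<Sum>i\<in>UNIV. ipd [Some k, Some i, Some i] u x t) \<le> (\<Sum>i\<in>(UNIV::'n set). B)"
      by (rule order_trans[OF norm_sum sum_mono]) (use calculation in blast)
    ultimately have "norm (\<Sum>i\<in>UNIV. ipd [Some k, Some i, Some i] u x t) \<le> real CARD('n) * B"
      "norm (ipd [Some k] u x t) \<le> B"
      by simp_all
    then show "norm (M_u_col u \<mu> \<gamma> k x t) \<le> B + \<bar>c\<bar> * (real CARD('n) * B)"
      unfolding col_ipd[OF \<open>x \<in> cbox a b\<close> \<open>t \<in> S\<close>]
      by (intro order_trans[OF norm_triangle_ineq] add_mono) (simp_all add: mult_left_mono)
  next
    fix k t assume "t \<in> S"
    then have "(L + \<bar>c\<bar> * (\<Sum>i\<in>(UNIV::'n set). L))-lipschitz_on (cbox a b)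
        (\<lambda>x. ipd [Some k] u x t + c *\<^sub>R (\<Sum>i\<in>UNIV. ipd [Some k, Some i, Some i] u x t))"
      by (intro lipschitz_on_add lipschitz_on_cmult lipschitz_on_sum L) auto
    then show "(L + \<bar>c\<bar> * (\<Sum>i\<in>(UNIV::'n set). L))-lipschitz_on (cbox a b) (\<lambda>x. M_u_col u \<mu> \<gamma> k x t)"
      by (rule lipschitz_on_transform) (use col_ipd \<open>t \<in> S\<close> in auto)
  qed
qed

lemma M_u_lipschitz_on_cbox:
  fixes u :: "real^'n \<Rightarrow> real \<Rightarrow> real^'n"
  assumes "Ck_on 4 (D \<times> {0..}) u" "cbox a b \<subseteq> D" "compact S" "S \<subseteq> {0..}"
  obtains L where "\<And>x t. x \<in> cbox a b \<Longrightarrow> t \<in> S \<Longrightarrow> L-lipschitz_on UNIV (M_u u \<mu> \<gamma> x t)"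
    and "\<And>v t. t \<in> S \<Longrightarrow> (L * norm v)-lipschitz_on (cbox a b) (\<lambda>x. M_u u \<mu> \<gamma> x t v)"
proof -
  obtain C Lc where "0 \<le> C"
    and col_bound: "\<And>k x t. x \<in> cbox a b \<Longrightarrow> t \<in> S \<Longrightarrow> norm (M_u_col u \<mu> \<gamma> k x t) \<le> C"
    and col_lipschitz: "\<And>k t. t \<in> S \<Longrightarrow> Lc-lipschitz_on (cbox a b) (\<lambda>x. M_u_col u \<mu> \<gamma> k x t)"
    using M_u_col_bounded_lipschitz[OF assms] by blast
  show thesis
  proof (rule that[of "real CARD('n) * max C Lc"])
    fix x t assume "x \<in> cbox a b" "t \<in> S"
    have "(real CARD('n) * C)-lipschitz_on UNIV (\<lambda>v. \<Sum>k\<in>UNIV. v$k *\<^sub>R M_u_col u \<mu> \<gamma> k x t)"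
      by (rule lipschitz_on_sum_scaleR_components(1)[where c="\<lambda>k x. M_u_col u \<mu> \<gamma> k x t" and K="cbox a b"])
         (use col_bound col_lipschitz \<open>x \<in> cbox a b\<close> \<open>t \<in> S\<close> \<open>0 \<le> C\<close> in auto)
    then show "(real CARD('n) * max C Lc)-lipschitz_on UNIV (M_u u \<mu> \<gamma> x t)"
      unfolding M_u_eq_sum_M_u_col by (rule lipschitz_on_le) simp
  next
    fix v t assume "t \<in> S"
    have "(real CARD('n) * Lc * norm v)-lipschitz_on (cbox a b) (\<lambda>x. \<Sum>k\<in>UNIV. v$k *\<^sub>R M_u_col u \<mu> \<gamma> k x t)"
      by (rule lipschitz_on_sum_scaleR_components(2)[where c="\<lambda>k x. M_u_col u \<mu> \<gamma> k x t" and C=C])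
         (use col_bound col_lipschitz \<open>t \<in> S\<close> \<open>0 \<le> C\<close> in auto)
    then show "(real CARD('n) * max C Lc * norm v)-lipschitz_on (cbox a b) (\<lambda>x. M_u u \<mu> \<gamma> x t v)"
      unfolding M_u_eq_sum_M_u_col by (rule lipschitz_on_le) (simp add: mult_right_mono)
  qed
qed

definition MR_coeffs_lipschitz_on ::
  "real \<Rightarrow> (real^'n::finite) set \<Rightarrow> real set \<Rightarrow> (real^'n \<Rightarrow> real \<Rightarrow> real^'n)
    \<Rightarrow> (real^'n \<Rightarrow> real \<Rightarrow> real^'n) \<Rightarrow> (real^'n \<Rightarrow> real \<Rightarrow> real^'n \<Rightarrow> real^'n) \<Rightarrow> bool" where
  "MR_coeffs_lipschitz_on L K S A B M \<longleftrightarrow>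
     (\<forall>s\<in>S. L-lipschitz_on K (\<lambda>x. A x s) \<and> L-lipschitz_on K (\<lambda>x. B x s) \<and>
        (\<forall>x\<in>K. L-lipschitz_on UNIV (M x s)) \<and> (\<forall>v. (L * norm v)-lipschitz_on K (\<lambda>x. M x s v)))"

lemma MR_coeffs_lipschitz_on_nonneg:
  "MR_coeffs_lipschitz_on L K S A B M \<Longrightarrow> s \<in> S \<Longrightarrow> 0 \<le> L"
  unfolding MR_coeffs_lipschitz_on_def using lipschitz_on_nonneg by blast

lemma MR_coeffs_lipschitz_onD:
  assumes "MR_coeffs_lipschitz_on L K S A B M" "s \<in> S" "x \<in> K" "x' \<in> K"
  shows "norm (A x s - A x' s) \<le> L * norm (x - x')"
    and "norm (B x s - B x' s) \<le> L * norm (x - x')"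
    and "norm (M x s v - M x s v') \<le> L * norm (v - v')"
    and "norm (M x s v - M x' s v) \<le> L * norm v * norm (x - x')"
  using assms unfolding MR_coeffs_lipschitz_on_def by (meson UNIV_I lipschitz_on_normD)+

lemma MR_coeffs_locally_lipschitz:
  fixes u :: "real^'n \<Rightarrow> real \<Rightarrow> real^'n"
  assumes D: "open D" and "0 \<le> t0" and u: "Ck_on 4 (D \<times> {0..}) u"
    and AB: "\<And>x t d. x \<in> D \<Longrightarrow> t0 \<le> t \<Longrightarrow>
        has_pd d (A_u u \<mu> \<gamma>) x t \<and> has_pd d (B_u u R \<mu> \<gamma> g) x t \<and>
        norm (pd d (A_u u \<mu> \<gamma>) x t) \<le> Lb \<and> norm (pd d (B_u u R \<mu> \<gamma> g) x t) \<le> Lb"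
    and "p \<in> D"
  obtains U L where "open U" "p \<in> U"
    "MR_coeffs_lipschitz_on L U {t0..\<tau>} (A_u u \<mu> \<gamma>) (B_u u R \<mu> \<gamma> g) (M_u u \<mu> \<gamma>)"
proof -
  obtain a b where box: "cbox a b \<subseteq> D" "p \<in> box a b"
    using open_contains_cbox[OF D \<open>p \<in> D\<close>] by metis
  have S: "compact {t0..\<tau>}" "{t0..\<tau>} \<subseteq> {0..}"
    using \<open>0 \<le> t0\<close> by auto
  obtain LM where LM: "\<And>x t. x \<in> cbox a b \<Longrightarrow> t \<in> {t0..\<tau>} \<Longrightarrow> LM-lipschitz_on UNIV (M_u u \<mu> \<gamma> x t)"
    "\<And>v t. t \<in> {t0..\<tau>} \<Longrightarrow> (LM * norm v)-lipschitz_on (cbox a b) (\<lambda>x. M_u u \<mu> \<gamma> x t v)"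
    using M_u_lipschitz_on_cbox[OF u box(1) S, of \<mu> \<gamma>] by metis
  have "0 \<le> Lb"
    using AB[OF \<open>p \<in> D\<close> order_refl, of None] norm_ge_zero[of "pd None (A_u u \<mu> \<gamma>) p t0"] by linarith
  have AB_lipschitz: "(real CARD('n) * Lb)-lipschitz_on (cbox a b) (\<lambda>x. F x s)"
    if "F = A_u u \<mu> \<gamma> \<or> F = B_u u R \<mu> \<gamma> g" "s \<in> {t0..\<tau>}" for F s
  proof (rule bounded_partial_derivatives_imp_lipschitz_on_cbox[where f'="\<lambda>j z. pd (Some j) F z s"])
    fix z j assume "z \<in> cbox a b"
    then have "z \<in> D" "t0 \<le> s" using box that by auto
    then show "((\<lambda>h. F (z + h *\<^sub>R axis j 1) s) has_vector_derivative pd (Some j) F z s) (at 0)"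
      and "norm (pd (Some j) F z s) \<le> Lb"
      using AB[of z s "Some j"] that(1) has_pd_Some_imp_has_vector_derivative by blast+
  qed fact
  define L where "L = max (real CARD('n) * Lb) LM"
  have "MR_coeffs_lipschitz_on L (box a b) {t0..\<tau>} (A_u u \<mu> \<gamma>) (B_u u R \<mu> \<gamma> g) (M_u u \<mu> \<gamma>)"
    unfolding MR_coeffs_lipschitz_on_def
  proof (intro ballI conjI allI)
    fix s assume s: "s \<in> {t0..\<tau>}"
    show "L-lipschitz_on (box a b) (\<lambda>x. A_u u \<mu> \<gamma> x s)"
      using AB_lipschitz[of "A_u u \<mu> \<gamma>", OF _ s] box_subset_cbox unfolding L_def
      by (meson lipschitz_on_mono max.cobounded1)
    show "L-lipschitz_on (box a b) (\<lambda>x. B_u u R \<mu> \<gamma> g x s)"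
      using AB_lipschitz[of "B_u u R \<mu> \<gamma> g", OF _ s] box_subset_cbox unfolding L_def
      by (meson lipschitz_on_mono max.cobounded1)
    show "L-lipschitz_on UNIV (M_u u \<mu> \<gamma> x s)" if "x \<in> box a b" for x
      using that box_subset_cbox unfolding L_def
      by (intro lipschitz_on_le[OF LM(1)[OF _ s]]) auto
    show "(L * norm v)-lipschitz_on (box a b) (\<lambda>x. M_u u \<mu> \<gamma> x s v)" for v
      using LM(2)[OF s, of v] box_subset_cbox unfolding L_def
      by (rule lipschitz_on_mono) (auto intro: mult_right_mono)
  qed
  then show thesis
    using that open_box box(2) by blast
qed

definition MR_solution_upto ::
  "(real^'n::finite \<Rightarrow> real \<Rightarrow> real^'n) \<Rightarrow> (real^'n \<Rightarrow> real \<Rightarrow> real^'n) \<Rightarrow> (real^'n \<Rightarrow> real \<Rightarrow> real^'n \<Rightarrow> real^'n)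
    \<Rightarrow> real \<Rightarrow> real \<Rightarrow> (real^'n) set \<Rightarrow> real \<Rightarrow> real \<Rightarrow> real^'n \<Rightarrow> real^'n
    \<Rightarrow> (real \<Rightarrow> real^'n) \<Rightarrow> (real \<Rightarrow> real^'n) \<Rightarrow> bool" where
  "MR_solution_upto A B M \<mu> \<kappa> D t0 \<tau> y0 w0 y w \<longleftrightarrow>
     continuous_on {t0..\<tau>} y \<and> continuous_on {t0..\<tau>} w \<and>
     (\<forall>t\<in>{t0..\<tau>}. y t \<in> D \<and>
        ((\<lambda>s. w s + A (y s) s) has_integral (y t - y0)) {t0..t} \<and>
        ((\<lambda>s. - \<mu> *\<^sub>R w s - M (y s) s (w s) - (\<kappa> * sqrt \<mu> / sqrt (t - s)) *\<^sub>R w s + B (y s) s)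
           has_integral (w t - w0)) {t0..t})"

lemma has_integral_inverse_sqrt_diff:
  fixes c t :: real
  assumes "c \<le> t"
  shows "((\<lambda>s. 1 / sqrt (t - s)) has_integral (2 * sqrt (t - c))) {c..t}"
proof -
  have "((\<lambda>s. 1 / sqrt (t - s)) has_integral (-2 * sqrt (t - t)) - (-2 * sqrt (t - c))) {c..t}"
  proof (rule fundamental_theorem_of_calculus_interior_strong[where S="{}"])
    show "continuous_on {c..t} (\<lambda>s. -2 * sqrt (t - s))"
      by (intro continuous_intros)
  next
    fix s assume "s \<in> {c<..<t} - {}"
    then have "0 < t - s" by simp
    then have "((\<lambda>s. -2 * sqrt (t - s)) has_real_derivative 1 / sqrt (t - s)) (at s)"
      by (auto intro!: derivative_eq_intros simp: field_simps)
    then show "((\<lambda>s. -2 * sqrt (t - s)) has_vector_derivative 1 / sqrt (t - s)) (at s)"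
      by (simp add: has_real_derivative_iff_has_vector_derivative)
  qed (use assms in auto)
  then show ?thesis by simp
qed

lemma has_integral_norm_bound_after_vanishing:
  fixes f :: "real \<Rightarrow> 'b::banach"
  assumes I: "(f has_integral I) {t0..t}" and "t0 \<le> ts" "ts \<le> t"
    and vanish: "\<And>s. s \<in> {t0..ts} \<Longrightarrow> f s = 0"
    and bound: "\<And>s. s \<in> {ts..t} \<Longrightarrow> norm (f s) \<le> a + b / sqrt (t - s)"
  shows "norm I \<le> a * (t - ts) + b * (2 * sqrt (t - ts))"
proof -
  have "f integrable_on {t0..t}" using I by blast
  then have "f integrable_on {ts..t}"
    by (rule integrable_subinterval_real) (use assms in auto)
  moreover note \<open>f integrable_on {t0..t}\<close>
  moreover have "integral {t0..ts} f = 0"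
    using has_integral_is_0[of "{t0..ts}" f] vanish by (simp add: integral_unique)
  ultimately have "I = integral {ts..t} f"
    using I Henstock_Kurzweil_Integration.integral_combine[of t0 ts t f] assms(2,3) by (simp add: integral_unique)
  have bound_integral: "((\<lambda>s. a + b * (1 / sqrt (t - s))) has_integral
      (a * (t - ts) + b * (2 * sqrt (t - ts)))) {ts..t}"
    using has_integral_add[OF has_integral_const_real[of a ts t]
        has_integral_mult_right[OF has_integral_inverse_sqrt_diff[OF \<open>ts \<le> t\<close>], of b]] \<open>ts \<le> t\<close>
    by (simp add: mult.commute)
  have "norm (integral {ts..t} f) \<le> a * (t - ts) + b * (2 * sqrt (t - ts))"
    using integral_norm_bound_integral[OF \<open>f integrable_on {ts..t}\<close> has_integral_integrable[OF bound_integral]]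
      bound integral_unique[OF bound_integral] by simp
  then show ?thesis using \<open>I = integral {ts..t} f\<close> by simp
qed

lemma MR_integrands_diff_bound:
  fixes A B :: "real^'n \<Rightarrow> real \<Rightarrow> real^'n"
  assumes L: "MR_coeffs_lipschitz_on L K S A B M" and "s \<in> S" "x \<in> K" "x' \<in> K"
    and "norm (x - x') \<le> m" "norm (v - v') \<le> m" "norm v' \<le> W"
  shows "norm ((v + A x s) - (v' + A x' s)) \<le> (1 + L) * m"
    and "norm ((- \<mu> *\<^sub>R v - M x s v - c *\<^sub>R v + B x s) - (- \<mu> *\<^sub>R v' - M x' s v' - c *\<^sub>R v' + B x' s))
           \<le> (\<bar>\<mu>\<bar> + L * (2 + W)) * m + \<bar>c\<bar> * m"
proof -
  note diff = MR_coeffs_lipschitz_onD[OF L \<open>s \<in> S\<close> \<open>x \<in> K\<close> \<open>x' \<in> K\<close>]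
  have "0 \<le> L"
    using MR_coeffs_lipschitz_on_nonneg[OF L \<open>s \<in> S\<close>] .
  have A_diff: "norm (A x s - A x' s) \<le> L * m" and B_diff: "norm (B x s - B x' s) \<le> L * m"
    using diff(1,2) mult_left_mono[OF assms(5) \<open>0 \<le> L\<close>] by linarith+
  have Mv_diff: "norm (M x s v - M x s v') \<le> L * m"
    using diff(3)[of v v'] mult_left_mono[OF assms(6) \<open>0 \<le> L\<close>] by linarith
  have "norm (M x s v' - M x' s v') \<le> L * norm v' * norm (x - x')"
    by (rule diff(4))
  also have "\<dots> \<le> L * W * m"
    using assms(5,7) \<open>0 \<le> L\<close> order_trans[OF norm_ge_zero assms(7)]
    by (intro mult_mono mult_left_mono) auto
  finally have Mx_diff: "norm (M x s v' - M x' s v') \<le> L * W * m" .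
  show "norm ((v + A x s) - (v' + A x' s)) \<le> (1 + L) * m"
    using norm_triangle_ineq[of "v - v'" "A x s - A x' s"] A_diff assms(6)
    by (simp add: algebra_simps)
  have "(- \<mu> *\<^sub>R v - M x s v - c *\<^sub>R v + B x s) - (- \<mu> *\<^sub>R v' - M x' s v' - c *\<^sub>R v' + B x' s)
      = - \<mu> *\<^sub>R (v - v') - (M x s v - M x s v') - (M x s v' - M x' s v') - c *\<^sub>R (v - v')
        + (B x s - B x' s)"
    by (simp add: algebra_simps)
  also have "norm \<dots> \<le> \<bar>\<mu>\<bar> * norm (v - v') + norm (M x s v - M x s v') + norm (M x s v' - M x' s v')
      + \<bar>c\<bar> * norm (v - v') + norm (B x s - B x' s)"
  proof -
    have "norm (a - b - d - e + f) \<le> norm a + norm b + norm d + norm e + norm f" for a b d e f :: "real^'n"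
      using norm_triangle_ineq4[of "a - b - d" e] norm_triangle_ineq4[of "a - b" d]
        norm_triangle_ineq4[of a b] norm_triangle_ineq[of "a - b - d - e" f] by linarith
    from this[of "- \<mu> *\<^sub>R (v - v')" "M x s v - M x s v'" "M x s v' - M x' s v'" "c *\<^sub>R (v - v')"
        "B x s - B x' s"]
    show ?thesis by (simp only: norm_scaleR abs_minus_cancel)
  qed
  also have "\<dots> \<le> \<bar>\<mu>\<bar> * m + L * m + L * W * m + \<bar>c\<bar> * m + L * m"
    using assms(6) A_diff B_diff Mv_diff Mx_diff by (intro add_mono mult_left_mono) auto
  finally show "norm ((- \<mu> *\<^sub>R v - M x s v - c *\<^sub>R v + B x s) - (- \<mu> *\<^sub>R v' - M x' s v' - c *\<^sub>R v' + B x' s))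
           \<le> (\<bar>\<mu>\<bar> + L * (2 + W)) * m + \<bar>c\<bar> * m"
    by (simp add: algebra_simps)
qed

lemma MR_solution_upto_diff_has_integral:
  assumes S1: "MR_solution_upto A B M \<mu> \<kappa> D t0 \<tau> y0 w0 y1 w1"
    and S2: "MR_solution_upto A B M \<mu> \<kappa> D t0 \<tau> y0 w0 y2 w2"
    and "t \<in> {t0..\<tau>}"
  shows "((\<lambda>s. (w1 s + A (y1 s) s) - (w2 s + A (y2 s) s)) has_integral (y1 t - y2 t)) {t0..t}"
    and "((\<lambda>s. (- \<mu> *\<^sub>R w1 s - M (y1 s) s (w1 s) - (\<kappa> * sqrt \<mu> / sqrt (t - s)) *\<^sub>R w1 s + B (y1 s) s)
        - (- \<mu> *\<^sub>R w2 s - M (y2 s) s (w2 s) - (\<kappa> * sqrt \<mu> / sqrt (t - s)) *\<^sub>R w2 s + B (y2 s) s))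
        has_integral (w1 t - w2 t)) {t0..t}"
proof -
  have "((\<lambda>s. w1 s + A (y1 s) s) has_integral (y1 t - y0)) {t0..t}"
      "((\<lambda>s. w2 s + A (y2 s) s) has_integral (y2 t - y0)) {t0..t}"
    and "((\<lambda>s. - \<mu> *\<^sub>R w1 s - M (y1 s) s (w1 s) - (\<kappa> * sqrt \<mu> / sqrt (t - s)) *\<^sub>R w1 s
        + B (y1 s) s) has_integral (w1 t - w0)) {t0..t}"
      "((\<lambda>s. - \<mu> *\<^sub>R w2 s - M (y2 s) s (w2 s) - (\<kappa> * sqrt \<mu> / sqrt (t - s)) *\<^sub>R w2 s
        + B (y2 s) s) has_integral (w2 t - w0)) {t0..t}"
    using S1 S2 \<open>t \<in> {t0..\<tau>}\<close> unfolding MR_solution_upto_def by blast+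
  from has_integral_diff[OF this(1,2)] has_integral_diff[OF this(3,4)]
  show "((\<lambda>s. (w1 s + A (y1 s) s) - (w2 s + A (y2 s) s)) has_integral (y1 t - y2 t)) {t0..t}"
    and "((\<lambda>s. (- \<mu> *\<^sub>R w1 s - M (y1 s) s (w1 s) - (\<kappa> * sqrt \<mu> / sqrt (t - s)) *\<^sub>R w1 s + B (y1 s) s)
        - (- \<mu> *\<^sub>R w2 s - M (y2 s) s (w2 s) - (\<kappa> * sqrt \<mu> / sqrt (t - s)) *\<^sub>R w2 s + B (y2 s) s))
        has_integral (w1 t - w2 t)) {t0..t}"
    by simp_all
qed

lemma linear_plus_sqrt_le_sqrt:
  fixes a b d h :: real
  assumes "0 \<le> a" "0 \<le> b" "0 \<le> d" "d \<le> h" "h \<le> 1"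
  shows "a * d + b * sqrt d \<le> (a + b) * sqrt h"
proof -
  have "sqrt h * sqrt h \<le> sqrt h * 1"
    using assms by (intro mult_left_mono) auto
  then have "d \<le> sqrt h"
    using assms by simp
  moreover have "sqrt d \<le> sqrt h"
    using assms(4) by simp
  ultimately show ?thesis
    using assms(1,2) by (simp add: distrib_right add_mono mult_left_mono)
qed

lemma MR_solution_upto_gap_bound:
  fixes A B :: "real^'n \<Rightarrow> real \<Rightarrow> real^'n"
  assumes L: "MR_coeffs_lipschitz_on L U {t0..\<tau>} A B M"
    and S1: "MR_solution_upto A B M \<mu> \<kappa> D t0 \<tau> y0 w0 y1 w1"
    and S2: "MR_solution_upto A B M \<mu> \<kappa> D t0 \<tau> y0 w0 y2 w2"
    and agree: "\<And>s. s \<in> {t0..ts} \<Longrightarrow> y1 s = y2 s \<and> w1 s = w2 s"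
    and "t0 \<le> ts" "ts + h \<le> \<tau>" "h \<le> 1"
    and near: "\<And>s. s \<in> {ts..ts+h} \<Longrightarrow> y1 s \<in> U \<and> y2 s \<in> U \<and> norm (w2 s) \<le> W \<and>
        norm (y1 s - y2 s) \<le> m \<and> norm (w1 s - w2 s) \<le> m"
    and t: "t \<in> {ts..ts+h}"
  shows "norm (y1 t - y2 t) + norm (w1 t - w2 t)
    \<le> (1 + \<bar>\<mu>\<bar> + L * (3 + W) + 2 * \<bar>\<kappa> * sqrt \<mu>\<bar>) * m * sqrt h"
proof -
  have "t \<in> {t0..\<tau>}" "ts \<le> t"
    using t assms(5,6) by auto
  have s_in: "s \<in> {t0..\<tau>}" "s \<in> {ts..ts+h}" if "s \<in> {ts..t}" for s
    using that t assms(5,6) by auto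
  have "0 \<le> m" "0 \<le> W"
    using near[OF t] by (meson norm_ge_zero order_trans)+
  have "0 \<le> L"
    using MR_coeffs_lipschitz_on_nonneg[OF L \<open>t \<in> {t0..\<tau>}\<close>] .
  note diff_integral = MR_solution_upto_diff_has_integral[OF S1 S2 \<open>t \<in> {t0..\<tau>}\<close>]
  have y_gap: "norm (y1 t - y2 t) \<le> (1 + L) * m * (t - ts) + 0 * (2 * sqrt (t - ts))"
  proof (rule has_integral_norm_bound_after_vanishing[OF diff_integral(1) \<open>t0 \<le> ts\<close> \<open>ts \<le> t\<close>])
    fix s assume "s \<in> {ts..t}"
    then show "norm ((w1 s + A (y1 s) s) - (w2 s + A (y2 s) s)) \<le> (1 + L) * m + 0 / sqrt (t - s)"
      using MR_integrands_diff_bound(1)[OF L s_in(1), of s "y1 s" "y2 s" m "w1 s" "w2 s" W]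
        near[OF s_in(2)] by auto
  qed (use agree in auto)
  have w_gap: "norm (w1 t - w2 t)
      \<le> (\<bar>\<mu>\<bar> + L * (2 + W)) * m * (t - ts) + \<bar>\<kappa> * sqrt \<mu>\<bar> * m * (2 * sqrt (t - ts))"
  proof (rule has_integral_norm_bound_after_vanishing[OF diff_integral(2) \<open>t0 \<le> ts\<close> \<open>ts \<le> t\<close>])
    fix s assume "s \<in> {ts..t}"
    moreover have "\<bar>\<kappa> * sqrt \<mu> / sqrt (t - s)\<bar> * m = \<bar>\<kappa> * sqrt \<mu>\<bar> * m / sqrt (t - s)"
      using \<open>s \<in> {ts..t}\<close> by simp
    ultimately show "norm ((- \<mu> *\<^sub>R w1 s - M (y1 s) s (w1 s) - (\<kappa> * sqrt \<mu> / sqrt (t - s)) *\<^sub>R w1 s + B (y1 s) s)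
        - (- \<mu> *\<^sub>R w2 s - M (y2 s) s (w2 s) - (\<kappa> * sqrt \<mu> / sqrt (t - s)) *\<^sub>R w2 s + B (y2 s) s))
        \<le> (\<bar>\<mu>\<bar> + L * (2 + W)) * m + \<bar>\<kappa> * sqrt \<mu>\<bar> * m / sqrt (t - s)"
      using MR_integrands_diff_bound(2)[OF L s_in(1), of s "y1 s" "y2 s" m "w1 s" "w2 s" W \<mu>
          "\<kappa> * sqrt \<mu> / sqrt (t - s)"] near[OF s_in(2)] by auto
  qed (use agree in auto)
  have "norm (y1 t - y2 t) + norm (w1 t - w2 t)
      \<le> ((1 + L) * m + (\<bar>\<mu>\<bar> + L * (2 + W)) * m) * (t - ts) + (2 * \<bar>\<kappa> * sqrt \<mu>\<bar> * m) * sqrt (t - ts)"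
    using y_gap w_gap by (simp add: algebra_simps)
  also have "\<dots> \<le> ((1 + L) * m + (\<bar>\<mu>\<bar> + L * (2 + W)) * m + 2 * \<bar>\<kappa> * sqrt \<mu>\<bar> * m) * sqrt h"
    using t \<open>h \<le> 1\<close> \<open>0 \<le> m\<close> \<open>0 \<le> W\<close> \<open>0 \<le> L\<close> by (intro linear_plus_sqrt_le_sqrt) auto
  finally show ?thesis
    by (simp add: algebra_simps)
qed

lemma continuous_on_stays_in_open:
  fixes f :: "'a::metric_space \<Rightarrow> 'b::topological_space"
  assumes "continuous_on S f" "open U" "t \<in> S" "f t \<in> U"
  obtains \<delta> where "0 < \<delta>" "\<And>s. s \<in> S \<Longrightarrow> dist s t < \<delta> \<Longrightarrow> f s \<in> U"
proof -
  have "\<forall>\<^sub>F s in at t within S. f s \<in> U"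
    using assms unfolding continuous_on_def by (blast intro: topological_tendstoD)
  then obtain \<delta> where "0 < \<delta>" "\<And>s. s \<in> S \<Longrightarrow> s \<noteq> t \<Longrightarrow> dist s t < \<delta> \<Longrightarrow> f s \<in> U"
    unfolding eventually_at by blast
  then show thesis
    using that \<open>f t \<in> U\<close> by metis
qed

lemma MR_solution_upto_agree_if_contractive:
  fixes A B :: "real^'n \<Rightarrow> real \<Rightarrow> real^'n"
  assumes L: "MR_coeffs_lipschitz_on L U {t0..\<tau>} A B M"
    and S1: "MR_solution_upto A B M \<mu> \<kappa> D t0 \<tau> y0 w0 y1 w1"
    and S2: "MR_solution_upto A B M \<mu> \<kappa> D t0 \<tau> y0 w0 y2 w2"
    and agree: "\<And>s. s \<in> {t0..ts} \<Longrightarrow> y1 s = y2 s \<and> w1 s = w2 s"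
    and "t0 \<le> ts" "ts + h \<le> \<tau>" "0 \<le> h" "h \<le> 1"
    and near: "\<And>s. s \<in> {ts..ts+h} \<Longrightarrow> y1 s \<in> U \<and> y2 s \<in> U \<and> norm (w2 s) \<le> W"
    and small: "(1 + \<bar>\<mu>\<bar> + L * (3 + W) + 2 * \<bar>\<kappa> * sqrt \<mu>\<bar>) * sqrt h \<le> 1 / 2"
    and "s \<in> {ts..ts+h}"
  shows "y1 s = y2 s \<and> w1 s = w2 s"
proof -
  define e where "e s = norm (y1 s - y2 s) + norm (w1 s - w2 s)" for s
  have "{ts..ts+h} \<subseteq> {t0..\<tau>}"
    using assms(5,6) by auto
  then have "continuous_on {ts..ts+h} e"
    using S1 S2 unfolding e_def MR_solution_upto_def
    by (intro continuous_intros) (auto intro: continuous_on_subset)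
  then obtain s0 where s0: "s0 \<in> {ts..ts+h}" "\<And>s. s \<in> {ts..ts+h} \<Longrightarrow> e s \<le> e s0"
    using continuous_attains_sup[of "{ts..ts+h}" e] \<open>0 \<le> h\<close> by auto
  have gap: "norm (y1 s - y2 s) \<le> e s0 \<and> norm (w1 s - w2 s) \<le> e s0" if "s \<in> {ts..ts+h}" for s
    using s0(2)[OF that] norm_ge_zero[of "y1 s - y2 s"] norm_ge_zero[of "w1 s - w2 s"]
    unfolding e_def by linarith
  have "norm (y1 s0 - y2 s0) + norm (w1 s0 - w2 s0)
      \<le> (1 + \<bar>\<mu>\<bar> + L * (3 + W) + 2 * \<bar>\<kappa> * sqrt \<mu>\<bar>) * e s0 * sqrt h"
  proof (rule MR_solution_upto_gap_bound[OF L S1 S2 agree assms(5,6,8) _ s0(1)])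
    fix s assume s: "s \<in> {ts..ts+h}"
    show "y1 s \<in> U \<and> y2 s \<in> U \<and> norm (w2 s) \<le> W \<and> norm (y1 s - y2 s) \<le> e s0 \<and> norm (w1 s - w2 s) \<le> e s0"
      using near[OF s] gap[OF s] by blast
  qed
  then have "e s0 \<le> (1 + \<bar>\<mu>\<bar> + L * (3 + W) + 2 * \<bar>\<kappa> * sqrt \<mu>\<bar>) * e s0 * sqrt h"
    by (simp add: e_def)
  also have "\<dots> \<le> e s0 / 2"
    using mult_left_mono[OF small, of "e s0"] by (simp add: e_def mult_ac)
  finally have "e s0 \<le> 0"
    by simp
  then have "norm (y1 s - y2 s) \<le> 0" "norm (w1 s - w2 s) \<le> 0"
    using gap[OF \<open>s \<in> {ts..ts+h}\<close>] by linarith+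
  then show ?thesis
    by simp
qed

lemma MR_solution_upto_agree_short_time:
  fixes A B :: "real^'n \<Rightarrow> real \<Rightarrow> real^'n"
  assumes L: "MR_coeffs_lipschitz_on L U {t0..\<tau>} A B M" and "open U"
    and S1: "MR_solution_upto A B M \<mu> \<kappa> D t0 \<tau> y0 w0 y1 w1"
    and S2: "MR_solution_upto A B M \<mu> \<kappa> D t0 \<tau> y0 w0 y2 w2"
    and "t0 \<le> ts" "ts < \<tau>" "y1 ts \<in> U"
    and agree: "\<And>s. s \<in> {t0..ts} \<Longrightarrow> y1 s = y2 s \<and> w1 s = w2 s"
  obtains h where "0 < h" "\<And>s. s \<in> {ts..ts+h} \<Longrightarrow> y1 s = y2 s \<and> w1 s = w2 s"
proof -
  have cont: "continuous_on {t0..\<tau>} y1" "continuous_on {t0..\<tau>} y2" "continuous_on {t0..\<tau>} w2"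
    using S1 S2 unfolding MR_solution_upto_def by auto
  obtain W where "\<forall>z\<in>w2 ` {t0..\<tau>}. norm z \<le> W"
    using compact_imp_bounded[OF compact_continuous_image[OF cont(3) compact_Icc]]
    unfolding bounded_iff by blast
  then have W: "\<And>s. s \<in> {t0..\<tau>} \<Longrightarrow> norm (w2 s) \<le> W"
    by blast
  have ts: "ts \<in> {t0..\<tau>}"
    using assms(5,6) by auto
  have "y2 ts \<in> U"
    using agree[of ts] \<open>y1 ts \<in> U\<close> \<open>t0 \<le> ts\<close> by auto
  obtain \<delta>1 \<delta>2 where "0 < \<delta>1" "0 < \<delta>2"
    and \<delta>: "\<And>s. s \<in> {t0..\<tau>} \<Longrightarrow> dist s ts < \<delta>1 \<Longrightarrow> y1 s \<in> U"
      "\<And>s. s \<in> {t0..\<tau>} \<Longrightarrow> dist s ts < \<delta>2 \<Longrightarrow> y2 s \<in> U"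
    using continuous_on_stays_in_open[OF cont(1) \<open>open U\<close> ts \<open>y1 ts \<in> U\<close>]
      continuous_on_stays_in_open[OF cont(2) \<open>open U\<close> ts \<open>y2 ts \<in> U\<close>] by metis
  define K where "K = 1 + \<bar>\<mu>\<bar> + L * (3 + W) + 2 * \<bar>\<kappa> * sqrt \<mu>\<bar>"
  have "0 < K"
    using W[OF ts] MR_coeffs_lipschitz_on_nonneg[OF L ts] norm_ge_zero[of "w2 ts"]
    unfolding K_def by (smt (verit) abs_ge_zero mult_nonneg_nonneg)
  \<comment> \<open>Short enough to stay in U, and to make the contraction factor K sqrt h at most 1/2.\<close>
  define h where "h = min (min \<delta>1 \<delta>2 / 2) (min (\<tau> - ts) (min 1 ((1 / (2 * K))\<^sup>2)))"
  have h: "0 < h" "h < \<delta>1" "h < \<delta>2" "ts + h \<le> \<tau>" "h \<le> 1"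
    using \<open>0 < \<delta>1\<close> \<open>0 < \<delta>2\<close> \<open>ts < \<tau>\<close> \<open>0 < K\<close> unfolding h_def by auto
  have "sqrt h \<le> 1 / (2 * K)"
    using real_sqrt_le_mono[of h "(1 / (2 * K))\<^sup>2"] \<open>0 < K\<close> unfolding h_def by simp
  then have "K * sqrt h \<le> 1 / 2"
    using \<open>0 < K\<close> by (simp add: field_simps)
  have near: "y1 s \<in> U \<and> y2 s \<in> U \<and> norm (w2 s) \<le> W" if "s \<in> {ts..ts+h}" for s
  proof -
    have "s \<in> {t0..\<tau>}" "dist s ts < \<delta>1" "dist s ts < \<delta>2"
      using that \<open>t0 \<le> ts\<close> h by (auto simp: dist_real_def)
    then show ?thesis using \<delta> W by blast
  qed
  have "y1 s = y2 s \<and> w1 s = w2 s" if "s \<in> {ts..ts+h}" for s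
    using MR_solution_upto_agree_if_contractive[OF L S1 S2 agree \<open>t0 \<le> ts\<close> h(4) less_imp_le[OF h(1)] h(5)
        near \<open>K * sqrt h \<le> 1 / 2\<close>[unfolded K_def] that] .
  with h(1) show thesis
    by (rule that)
qed

lemma MR_solution_upto_initial:
  assumes "MR_solution_upto A B M \<mu> \<kappa> D t0 \<tau> y0 w0 y w" "t0 \<le> \<tau>"
  shows "y t0 = y0 \<and> w t0 = w0"
proof -
  have "t0 \<in> {t0..\<tau>}"
    using assms(2) by simp
  with assms(1) have "((\<lambda>s. w s + A (y s) s) has_integral (y t0 - y0)) {t0..t0}"
    "((\<lambda>s. - \<mu> *\<^sub>R w s - M (y s) s (w s) - (\<kappa> * sqrt \<mu> / sqrt (t0 - s)) *\<^sub>R w s + B (y s) s)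
       has_integral (w t0 - w0)) {t0..t0}"
    unfolding MR_solution_upto_def by blast+
  then have "((\<lambda>s. w s + A (y s) s) has_integral (y t0 - y0)) {t0}"
    "((\<lambda>s. - \<mu> *\<^sub>R w s - M (y s) s (w s) - (\<kappa> * sqrt \<mu> / sqrt (t0 - s)) *\<^sub>R w s + B (y s) s)
       has_integral (w t0 - w0)) {t0}"
    by simp_all
  then have "y t0 - y0 = 0" "w t0 - w0 = 0"
    using has_integral_unique[OF _ has_integral_refl(2)] by blast+
  then show ?thesis by simp
qed

lemma real_induction_Icc:
  fixes a b :: real
  assumes start: "P a"
    and closed: "\<And>t. a < t \<Longrightarrow> t \<le> b \<Longrightarrow> (\<And>s. a \<le> s \<Longrightarrow> s < t \<Longrightarrow> P s) \<Longrightarrow> P t"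
    and step: "\<And>t. a \<le> t \<Longrightarrow> t < b \<Longrightarrow> (\<And>s. a \<le> s \<Longrightarrow> s \<le> t \<Longrightarrow> P s) \<Longrightarrow> \<exists>h>0. \<forall>s\<in>{t..t+h}. P s"
    and "t \<in> {a..b}"
  shows "P t"
proof (rule ccontr)
  assume "\<not> P t"
  define F where "F = {s \<in> {a..b}. \<not> P s}"
  have "t \<in> F" "F \<subseteq> {a..b}"
    using \<open>\<not> P t\<close> \<open>t \<in> {a..b}\<close> by (auto simp: F_def)
  then have "bdd_below F"
    by (intro bdd_below_mono[OF bdd_below_Icc])
  define c where "c = Inf F"
  have "a \<le> c"
    unfolding c_def using \<open>t \<in> F\<close> \<open>F \<subseteq> {a..b}\<close> by (intro cInf_greatest) auto
  have "c \<le> t"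
    unfolding c_def by (rule cInf_lower[OF \<open>t \<in> F\<close> \<open>bdd_below F\<close>])
  have below: "P s" if "a \<le> s" "s < c" for s
  proof (rule ccontr)
    assume "\<not> P s"
    then have "s \<in> F"
      using that \<open>c \<le> t\<close> \<open>t \<in> {a..b}\<close> by (auto simp: F_def)
    then show False
      using cInf_lower[OF _ \<open>bdd_below F\<close>, of s] \<open>s < c\<close> unfolding c_def by simp
  qed
  have upto: "P s" if "a \<le> s" "s \<le> c" for s
  proof (cases "s < c")
    case False
    then have "s = c" using that(2) by simp
    show ?thesis
    proof (cases "a < c")
      case True
      then show ?thesis using closed[OF True _ below] \<open>s = c\<close> \<open>c \<le> t\<close> \<open>t \<in> {a..b}\<close> by simp
    next
      case False
      then show ?thesis using start \<open>s = c\<close> \<open>a \<le> c\<close> by simp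
    qed
  qed (use below that in blast)
  have "c \<noteq> t"
    using upto[of t] \<open>a \<le> c\<close> \<open>\<not> P t\<close> by auto
  then have "c < b"
    using \<open>c \<le> t\<close> \<open>t \<in> {a..b}\<close> by auto
  then obtain h where "0 < h" and h: "\<And>s. s \<in> {c..c+h} \<Longrightarrow> P s"
    using step[OF \<open>a \<le> c\<close> _ upto] by blast
  obtain f where "f \<in> F" "f < c + h"
    using cInf_lessD[of F "c + h"] \<open>t \<in> F\<close> \<open>0 < h\<close> unfolding c_def by auto
  moreover have "c \<le> f"
    unfolding c_def by (rule cInf_lower[OF \<open>f \<in> F\<close> \<open>bdd_below F\<close>])
  ultimately show False
    using h[of f] by (auto simp: F_def)
qed

lemma continuous_on_eq_at_left_limit:
  fixes f g :: "real \<Rightarrow> 'a::real_normed_vector"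
  assumes "continuous_on {a..b} f" "continuous_on {a..b} g" "a < t" "t \<le> b"
    and "\<And>s. a \<le> s \<Longrightarrow> s < t \<Longrightarrow> f s = g s"
  shows "f t = g t"
proof -
  define G where "G = {s \<in> {a..b}. f s - g s = 0}"
  have "closed G"
    unfolding G_def using assms(1,2) by (intro continuous_closed_preimage_constant continuous_intros) auto
  moreover have "{a..<t} \<subseteq> G"
    using assms(4,5) by (auto simp: G_def)
  ultimately have "closure {a..<t} \<subseteq> G"
    by (simp add: closure_minimal)
  moreover have "t \<in> closure {a..<t}"
    using assms(3) by simp
  ultimately show ?thesis
    by (auto simp: G_def)
qed

lemma MR_solution_upto_unique:
  fixes A B :: "real^'n \<Rightarrow> real \<Rightarrow> real^'n"
  assumes local: "\<And>p. p \<in> D \<Longrightarrow> \<exists>U L. open U \<and> p \<in> U \<and> MR_coeffs_lipschitz_on L U {t0..\<tau>} A B M"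
    and S1: "MR_solution_upto A B M \<mu> \<kappa> D t0 \<tau> y0 w0 y1 w1"
    and S2: "MR_solution_upto A B M \<mu> \<kappa> D t0 \<tau> y0 w0 y2 w2"
    and "t \<in> {t0..\<tau>}"
  shows "y1 t = y2 t \<and> w1 t = w2 t"
proof (rule real_induction_Icc[where P="\<lambda>s. y1 s = y2 s \<and> w1 s = w2 s", OF _ _ _ \<open>t \<in> {t0..\<tau>}\<close>])
  have "t0 \<le> \<tau>"
    using \<open>t \<in> {t0..\<tau>}\<close> by simp
  then show "y1 t0 = y2 t0 \<and> w1 t0 = w2 t0"
    using MR_solution_upto_initial[OF S1] MR_solution_upto_initial[OF S2] by simp
next
  fix t assume "t0 < t" "t \<le> \<tau>" and below: "\<And>s. t0 \<le> s \<Longrightarrow> s < t \<Longrightarrow> y1 s = y2 s \<and> w1 s = w2 s"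
  have "continuous_on {t0..\<tau>} (\<lambda>s. (y1 s, w1 s))" "continuous_on {t0..\<tau>} (\<lambda>s. (y2 s, w2 s))"
    using S1 S2 unfolding MR_solution_upto_def by (auto intro: continuous_on_Pair)
  from continuous_on_eq_at_left_limit[OF this \<open>t0 < t\<close> \<open>t \<le> \<tau>\<close>] below
  show "y1 t = y2 t \<and> w1 t = w2 t"
    by simp
next
  fix t assume "t0 \<le> t" "t < \<tau>" and upto: "\<And>s. t0 \<le> s \<Longrightarrow> s \<le> t \<Longrightarrow> y1 s = y2 s \<and> w1 s = w2 s"
  have "y1 t \<in> D"
    using S1 \<open>t0 \<le> t\<close> \<open>t < \<tau>\<close> unfolding MR_solution_upto_def by auto
  then obtain U L where "open U" "y1 t \<in> U" "MR_coeffs_lipschitz_on L U {t0..\<tau>} A B M"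
    using local by blast
  from MR_solution_upto_agree_short_time[OF this(3,1) S1 S2 \<open>t0 \<le> t\<close> \<open>t < \<tau>\<close> this(2)] upto
  show "\<exists>h>0. \<forall>s\<in>{t..t+h}. y1 s = y2 s \<and> w1 s = w2 s"
    by (metis atLeastAtMost_iff)
qed

lemma continuous_on_Union_openin:
  assumes "\<And>i. i \<in> I \<Longrightarrow> openin (top_of_set (\<Union>i\<in>I. S i)) (S i)"
    and "\<And>i. i \<in> I \<Longrightarrow> continuous_on (S i) f"
  shows "continuous_on (\<Union>i\<in>I. S i) f"
proof -
  have "continuous_map (top_of_set (\<Union>i\<in>I. S i)) euclidean f"
  proof (rule pasting_lemma[where f="\<lambda>_. f" and T=S])
    fix i assume "i \<in> I"
    then show "openin (top_of_set (\<Union>i\<in>I. S i)) (S i)"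
      by (rule assms(1))
    have "(\<Union>i\<in>I. S i) \<inter> S i = S i"
      using \<open>i \<in> I\<close> by blast
    then show "continuous_map (subtopology (top_of_set (\<Union>i\<in>I. S i)) (S i)) euclidean f"
      using assms(2)[OF \<open>i \<in> I\<close>] by (simp add: subtopology_subtopology)
  qed auto
  then show ?thesis by simp
qed

lemma openin_Union_ereal_intervals:
  assumes "\<alpha> \<in> I"
  shows "openin (top_of_set (\<Union>\<alpha>\<in>I. {t. t0 \<le> t \<and> ereal t < Ta \<alpha>})) {t. t0 \<le> t \<and> ereal t < Ta \<alpha>}"
proof -
  have "open {t. ereal t < Ta \<alpha>}"
    by (rule open_Collect_less) (auto intro: continuous_intros)
  then show ?thesis
    unfolding openin_open using assms by blast
qed

lemma MR_solution_upto_cong: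
  assumes "MR_solution_upto A B M \<mu> \<kappa> D t0 \<tau> y0 w0 y w"
    and "\<And>s. s \<in> {t0..\<tau>} \<Longrightarrow> y' s = y s \<and> w' s = w s"
  shows "MR_solution_upto A B M \<mu> \<kappa> D t0 \<tau> y0 w0 y' w'"
proof -
  have eq: "y' s = y s" "w' s = w s" if "t0 \<le> s" "s \<le> \<tau>" for s
    using assms(2)[of s] that by auto
  have cont: "continuous_on {t0..\<tau>} y" "continuous_on {t0..\<tau>} w"
    using assms(1) unfolding MR_solution_upto_def by auto
  have "continuous_on {t0..\<tau>} y'"
    using cont(1) by (rule continuous_on_eq) (simp add: eq)
  moreover have "continuous_on {t0..\<tau>} w'"
    using cont(2) by (rule continuous_on_eq) (simp add: eq)
  moreover have "y' t \<in> D \<and>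
      ((\<lambda>s. w' s + A (y' s) s) has_integral (y' t - y0)) {t0..t} \<and>
      ((\<lambda>s. - \<mu> *\<^sub>R w' s - M (y' s) s (w' s) - (\<kappa> * sqrt \<mu> / sqrt (t - s)) *\<^sub>R w' s + B (y' s) s)
         has_integral (w' t - w0)) {t0..t}" if t: "t \<in> {t0..\<tau>}" for t
  proof -
    have eq_t: "y' s = y s" "w' s = w s" if "s \<in> {t0..t}" for s
      using that t by (auto simp: eq)
    from assms(1) t have "y t \<in> D"
      and "((\<lambda>s. w s + A (y s) s) has_integral (y t - y0)) {t0..t}"
      and "((\<lambda>s. - \<mu> *\<^sub>R w s - M (y s) s (w s) - (\<kappa> * sqrt \<mu> / sqrt (t - s)) *\<^sub>R w s + B (y s) s)
           has_integral (w t - w0)) {t0..t}"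
      unfolding MR_solution_upto_def by blast+
    moreover have "y' t = y t" "w' t = w t"
      using t by (simp_all add: eq)
    ultimately show ?thesis
      by (auto elim!: has_integral_eq[rotated] simp: eq_t)
  qed
  ultimately show ?thesis
    unfolding MR_solution_upto_def by blast
qed

lemma MR_solution_imp_upto:
  assumes "MR_solution u R \<mu> \<kappa> \<gamma> g D t0 T y0 w0 y w" "ereal \<tau> < T"
  shows "MR_solution_upto (A_u u \<mu> \<gamma>) (B_u u R \<mu> \<gamma> g) (M_u u \<mu> \<gamma>) \<mu> \<kappa> D t0 \<tau> y0 w0 y w"
proof -
  have "{t0..\<tau>} \<subseteq> {t. t0 \<le> t \<and> ereal t < T}"
    using assms(2) le_less_trans[of "ereal _" "ereal \<tau>" T] by auto
  then show ?thesis
    using assms(1) unfolding MR_solution_def MR_solution_upto_def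
    by (auto intro: continuous_on_subset)
qed

lemma MR_solutions_agree:
  fixes u :: "real^'n \<Rightarrow> real \<Rightarrow> real^'n"
  assumes "open D" "0 \<le> t0" "Ck_on 4 (D \<times> {0..}) u"
    and "\<And>x t d. x \<in> D \<Longrightarrow> t0 \<le> t \<Longrightarrow>
        has_pd d (A_u u \<mu> \<gamma>) x t \<and> has_pd d (B_u u R \<mu> \<gamma> g) x t \<and>
        norm (pd d (A_u u \<mu> \<gamma>) x t) \<le> Lb \<and> norm (pd d (B_u u R \<mu> \<gamma> g) x t) \<le> Lb"
    and S1: "MR_solution u R \<mu> \<kappa> \<gamma> g D t0 T y0 w0 y w"
    and S2: "MR_solution u R \<mu> \<kappa> \<gamma> g D t0 T' y0 w0 y' w'"
    and "t0 \<le> t" "ereal t < T" "ereal t < T'"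
  shows "y t = y' t \<and> w t = w' t"
proof (rule MR_solution_upto_unique)
  show "\<exists>U L. open U \<and> p \<in> U \<and> MR_coeffs_lipschitz_on L U {t0..t} (A_u u \<mu> \<gamma>) (B_u u R \<mu> \<gamma> g) (M_u u \<mu> \<gamma>)"
    if "p \<in> D" for p
    using MR_coeffs_locally_lipschitz[OF assms(1-4) that] by metis
qed (use MR_solution_imp_upto[OF S1] MR_solution_imp_upto[OF S2] assms(7-9) in auto)

lemma MR_solution_Union:
  assumes "I \<noteq> {}"
    and sols: "\<And>\<alpha>. \<alpha> \<in> I \<Longrightarrow> MR_solution u R \<mu> \<kappa> \<gamma> g D t0 (Ta \<alpha>) y0 w0 (ya \<alpha>) (wa \<alpha>)"
    and T: "{t. t0 \<le> t \<and> ereal t < T} = (\<Union>\<alpha>\<in>I. {t. t0 \<le> t \<and> ereal t < Ta \<alpha>})"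
    and glue: "\<And>\<alpha> t. \<alpha> \<in> I \<Longrightarrow> t0 \<le> t \<Longrightarrow> ereal t < Ta \<alpha> \<Longrightarrow> y t = ya \<alpha> t \<and> w t = wa \<alpha> t"
  shows "MR_solution u R \<mu> \<kappa> \<gamma> g D t0 T y0 w0 y w"
  unfolding MR_solution_def
proof (intro conjI allI impI)
  obtain \<alpha> where "\<alpha> \<in> I"
    using \<open>I \<noteq> {}\<close> by blast
  then have "t0 \<in> {t. t0 \<le> t \<and> ereal t < T}"
    using sols[of \<alpha>] T unfolding MR_solution_def by auto
  then show "ereal t0 < T" by simp
next
  have "continuous_on {t. t0 \<le> t \<and> ereal t < Ta \<alpha>} y"
    "continuous_on {t. t0 \<le> t \<and> ereal t < Ta \<alpha>} w" if "\<alpha> \<in> I" for \<alpha>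
  proof -
    have cont: "continuous_on {t. t0 \<le> t \<and> ereal t < Ta \<alpha>} (ya \<alpha>)"
      "continuous_on {t. t0 \<le> t \<and> ereal t < Ta \<alpha>} (wa \<alpha>)"
      using sols[OF that] unfolding MR_solution_def by auto
    show "continuous_on {t. t0 \<le> t \<and> ereal t < Ta \<alpha>} y"
      using cont(1) by (rule continuous_on_eq) (simp add: glue[OF that])
    show "continuous_on {t. t0 \<le> t \<and> ereal t < Ta \<alpha>} w"
      using cont(2) by (rule continuous_on_eq) (simp add: glue[OF that])
  qed
  then show "continuous_on {t. t0 \<le> t \<and> ereal t < T} y" "continuous_on {t. t0 \<le> t \<and> ereal t < T} w"
    unfolding T by (auto intro: continuous_on_Union_openin openin_Union_ereal_intervals)
next
  fix t assume "t0 \<le> t \<and> ereal t < T"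
  then obtain \<alpha> where "\<alpha> \<in> I" "ereal t < Ta \<alpha>"
    using T by blast
  have "MR_solution_upto (A_u u \<mu> \<gamma>) (B_u u R \<mu> \<gamma> g) (M_u u \<mu> \<gamma>) \<mu> \<kappa> D t0 t y0 w0 y w"
  proof (rule MR_solution_upto_cong[OF MR_solution_imp_upto[OF sols]])
    show "y s = ya \<alpha> s \<and> w s = wa \<alpha> s" if "s \<in> {t0..t}" for s
      using glue[OF \<open>\<alpha> \<in> I\<close>, of s] that le_less_trans[of "ereal s" "ereal t" "Ta \<alpha>"] \<open>ereal t < Ta \<alpha>\<close>
      by auto
  qed fact+
  then show "y t \<in> D"
    "((\<lambda>s. w s + A_u u \<mu> \<gamma> (y s) s) has_integral (y t - y0)) {t0..t}"
    "((\<lambda>s. - \<mu> *\<^sub>R w s - M_u u \<mu> \<gamma> (y s) s (w s) - (\<kappa> * sqrt \<mu> / sqrt (t - s)) *\<^sub>R w s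
        + B_u u R \<mu> \<gamma> g (y s) s) has_integral (w t - w0)) {t0..t}"
    using \<open>t0 \<le> t \<and> ereal t < T\<close> unfolding MR_solution_upto_def by auto
qed

theorem lemma3p3:
  fixes u :: "real^'n \<Rightarrow> real \<Rightarrow> real^'n"
    and D :: "(real^'n) set"
    and R \<mu> \<kappa> \<gamma> t0 :: real
    and g y0 w0 :: "real^'n"
    and I :: "'a set"
    and Ta :: "'a \<Rightarrow> ereal"
    and ya wa :: "'a \<Rightarrow> real \<Rightarrow> real^'n"
    and T :: ereal
  assumes D_domain: "open D" "connected D"
    and t0: "t0 \<ge> 0"
    and pos: "R > 0" "\<mu> > 0" "\<kappa> > 0" "\<gamma> > 0"
    and u_smooth: "Ck_on 4 (D \<times> {0..}) u"
    and star: "\<exists>Lb. \<forall>x\<in>D. \<forall>t\<ge>t0. \<forall>d.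
        has_pd d (A_u u \<mu> \<gamma>) x t \<and> has_pd d (B_u u R \<mu> \<gamma> g) x t \<and>
        norm (pd d (A_u u \<mu> \<gamma>) x t) < Lb \<and> norm (pd d (B_u u R \<mu> \<gamma> g) x t) < Lb"
    and star_cont: "\<forall>d. continuous_on (D \<times> {t0..}) (\<lambda>(x,t). pd d (A_u u \<mu> \<gamma>) x t)
                      \<and> continuous_on (D \<times> {t0..}) (\<lambda>(x,t). pd d (B_u u R \<mu> \<gamma> g) x t)"
    and y0: "y0 \<in> D"
    and I_ne: "I \<noteq> {}"
    and sols: "\<forall>\<alpha>\<in>I. MR_solution u R \<mu> \<kappa> \<gamma> g D t0 (Ta \<alpha>) y0 w0 (ya \<alpha>) (wa \<alpha>)"
    and T: "{t. t0 \<le> t \<and> ereal t < T} = (\<Union>\<alpha>\<in>I. {t. t0 \<le> t \<and> ereal t < Ta \<alpha>})"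
  shows "\<exists>y w. (\<forall>\<alpha>\<in>I. \<forall>t. t0 \<le> t \<and> ereal t < Ta \<alpha> \<longrightarrow> y t = ya \<alpha> t \<and> w t = wa \<alpha> t)
            \<and> MR_solution u R \<mu> \<kappa> \<gamma> g D t0 T y0 w0 y w"
proof -
  obtain Lb where Lb: "\<And>x t d. x \<in> D \<Longrightarrow> t0 \<le> t \<Longrightarrow>
      has_pd d (A_u u \<mu> \<gamma>) x t \<and> has_pd d (B_u u R \<mu> \<gamma> g) x t \<and>
      norm (pd d (A_u u \<mu> \<gamma>) x t) \<le> Lb \<and> norm (pd d (B_u u R \<mu> \<gamma> g) x t) \<le> Lb"
    using star by (meson less_imp_le)
  define sel where "sel t = (SOME \<alpha>. \<alpha> \<in> I \<and> ereal t < Ta \<alpha>)" for t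
  define y where "y t = ya (sel t) t" for t
  define w where "w t = wa (sel t) t" for t
  have glue: "y t = ya \<alpha> t \<and> w t = wa \<alpha> t" if "\<alpha> \<in> I" "t0 \<le> t" "ereal t < Ta \<alpha>" for \<alpha> t
  proof -
    have "sel t \<in> I \<and> ereal t < Ta (sel t)"
      unfolding sel_def by (rule someI[of _ \<alpha>]) (use that in simp)
    then show ?thesis
      unfolding y_def w_def using sols that
      by (intro MR_solutions_agree[OF D_domain(1) t0 u_smooth Lb, where T="Ta (sel t)" and T'="Ta \<alpha>"]) auto
  qed
  have "MR_solution u R \<mu> \<kappa> \<gamma> g D t0 T y0 w0 y w"
    using sols by (intro MR_solution_Union[OF I_ne _ T glue]) auto
  then show ?thesis
    using glue by blast
qed

end
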